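(* Let $M=(Q,\mathcal{A},\Delta,I,F)$ be a complete symbolic finite automaton. Let $n=|Q|$, $m=|\Delta|$, $k$ the size of the largest predicate used in $\Delta$, $m_q$ the number of transitions of $\Delta$ leaving $q$ for each $q\in Q$, and $\hat m=\max\{m_q\mid q\in Q\}$. Then the algorithm LocalSim described in the context computes $\preceq_M$ in time $$O\Big(n\sum_{q\in Q} m_q 2^{m_q} + m\,\mathcal{C}_{sat}(\hat m,k)\sum_{q\in Q}2^{m_q}\Big).$$
   Context: An effective Boolean algebra is $\mathcal{A}=(\mathfrak{D},\mathbb{P},[\![\cdot]\!],\vee,\wedge,\neg)$ where $\mathbb{P}$ is a set of predicates closed under $\vee,\wedge,\neg$, with an interpretation $[\![\cdot]\!]:\mathbb{P}\to 2^{\mathfrak{D}}$ mapping $\vee,\wedge,\neg$ to union, intersection and complement w.r.t. $\mathfrak{D}$; $\mathit{IsSat}(\varphi)$ means $[\![\varphi]\!]\neq\emptyset$, and the operations and $\mathit{IsSat}$ are computable. Predicates have a measurable size; $\mathcal{C}_{sat}(x,y)$ denotes the worst-case complexity of constructing a predicate obtained by applying $x$ operations of $\mathcal{A}$ to predicates of size at most $y$ and checking its satisfiability. An SFA is $M=(Q,\mathcal{A},\Delta,I,F)$ with finite state set $Q$, finite transition relation $\Delta\subseteq Q\times\mathbb{P}\times Q$ whose predicates are satisfiable, initial states $I$, final states $F$; its concrete transitions are $[\![\Delta]\!]=\{(q,a,p)\mid (q,\psi,p)\in\Delta, a\in[\![\psi]\!]\}$. $M$ is complete if for every $q\in Q$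 and $a\in\mathfrak{D}$ there is $p$ with $(q,a,p)\in[\![\Delta]\!]$. A relation $S\subseteq Q\times Q$ is a simulation on $M$ if whenever $(p,r)\in S$: $p\in F$ implies $r\in F$, and for all $a\in\mathfrak{D}$ and $(p,a,p')\in[\![\Delta]\!]$ there is $(r,a,r')\in[\![\Delta]\!]$ with $(p',r')\in S$; $\preceq_M$ is the unique maximal simulation. The minterms $\mathrm{Minterms}(\Phi)$ of a finite set $\Phi$ of predicates are the satisfiable predicates among $\{\bigwedge_{\phi\in\Phi'}\phi\wedge\bigwedge_{\phi\in\Phi\setminus\Phi'}\neg\phi\mid\Phi'\subseteq\Phi\}$. For $p\in Q$ let $\mathbb{P}_{\Delta,p}$ be the set of predicates on transitions of $\Delta$ leaving $p$. The locally mintermised form $\Delta_L$ of $\Delta$ is obtained by replacing each $(p,\varphi,q)\in\Delta$ by $\{(p,\omega,q)\mid\omega\in\mathrm{Minterms}(\mathbb{P}_{\Delta,p}),\ \mathit{IsSat}(\omega\wedge\varphi)\}$. Algorithm LocalSim (input: a complete SFA $M$): 1. Compute $\Delta_L$. 2. For all $p,q\in Q$ and every transition $(q,\psi,t)\in\Delta_L$, set a counter $N_\psi(q,p):=|\{r\mid (q,\psi,r)\in\Delta_L\}|$. 3. Set $\mathit{Sim}:=Q\times Q$ and $\mathit{NotSim}:=F\times(Q\setminus F)$. 4. While $\mathit{NotSim}\neq\emptyset$: remove some $(i,j)$ from $\mathit{NotSim}$ and from $\mathit{Sim}$; for every transition $(t,\psi_{tj},j)\in\Delta_L$: decrement $N_{\psi_{tj}}(t,i)$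 by one, and if it becomes $0$, then for every transition $(s,\varphi_{si},i)\in\Delta$ with $(s,t)\in\mathit{Sim}$, if $\mathit{IsSat}(\psi_{tj}\wedge\varphi_{si})$ then add $(s,t)$ to $\mathit{NotSim}$. 5. Return $\mathit{Sim}$. *)

theory Defs
  imports Main "HOL-Library.Extended_Nat"
begin

datatype 'p bform = Lit bool 'p | AndF "'p bform" "'p bform" | OrF "'p bform" "'p bform"
  | NotF "'p bform"

fun fsem :: "('p \<Rightarrow> 'd set) \<Rightarrow> 'p bform \<Rightarrow> 'd set" where
  "fsem sem (Lit b p) = (if b then sem p else - sem p)"
| "fsem sem (AndF f g) = fsem sem f \<inter> fsem sem g"
| "fsem sem (OrF f g) = fsem sem f \<union> fsem sem g"
| "fsem sem (NotF f) = - fsem sem f"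

definition IsSat :: "('p \<Rightarrow> 'd set) \<Rightarrow> 'p bform \<Rightarrow> bool" where
  "IsSat sem f \<longleftrightarrow> fsem sem f \<noteq> {}"

fun nops :: "'p bform \<Rightarrow> nat" where
  "nops (Lit b p) = 0"
| "nops (AndF f g) = Suc (nops f + nops g)"
| "nops (OrF f g) = Suc (nops f + nops g)"
| "nops (NotF f) = Suc (nops f)"

fun batoms :: "'p bform \<Rightarrow> 'p set" where
  "batoms (Lit b p) = {p}"
| "batoms (AndF f g) = batoms f \<union> batoms g"
| "batoms (OrF f g) = batoms f \<union> batoms g"
| "batoms (NotF f) = batoms f"

text \<open>C_sat(x,y): worst-case cost (given the cost function qcost of constructing a
  Boolean combination and checking its satisfiability) over all predicates obtained by
  applying at most x operations to predicates of size at most y.\<close>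
definition Csat :: "('p \<Rightarrow> nat) \<Rightarrow> ('p bform \<Rightarrow> nat) \<Rightarrow> nat \<Rightarrow> nat \<Rightarrow> enat" where
  "Csat sz qcost x y =
     (SUP f \<in> {f. nops f \<le> x \<and> (\<forall>p\<in>batoms f. sz p \<le> y)}. enat (qcost f))"

definition sfa :: "('p \<Rightarrow> 'd set) \<Rightarrow> 'q set \<Rightarrow> ('q \<times> 'p \<times> 'q) set \<Rightarrow> 'q set \<Rightarrow> 'q set \<Rightarrow> bool" where
  "sfa sem Q Delta I F \<longleftrightarrow> finite Q \<and> finite Delta \<and>
     (\<forall>(q, \<phi>, p) \<in> Delta. q \<in> Q \<and> p \<in> Q \<and> sem \<phi> \<noteq> {}) \<and> I \<subseteq> Q \<and> F \<subseteq> Q"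

definition ctrans :: "('p \<Rightarrow> 'd set) \<Rightarrow> ('q \<times> 'p \<times> 'q) set \<Rightarrow> ('q \<times> 'd \<times> 'q) set" where
  "ctrans sem Delta = {(q, a, p). \<exists>\<phi>. (q, \<phi>, p) \<in> Delta \<and> a \<in> sem \<phi>}"

definition complete_sfa :: "('p \<Rightarrow> 'd set) \<Rightarrow> 'q set \<Rightarrow> ('q \<times> 'p \<times> 'q) set \<Rightarrow> bool" where
  "complete_sfa sem Q Delta \<longleftrightarrow> (\<forall>q\<in>Q. \<forall>a. \<exists>p. (q, a, p) \<in> ctrans sem Delta)"

definition is_simulation ::
  "('p \<Rightarrow> 'd set) \<Rightarrow> 'q set \<Rightarrow> ('q \<times> 'p \<times> 'q) set \<Rightarrow> 'q set \<Rightarrow> ('q \<times> 'q) set \<Rightarrow> bool" where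
  "is_simulation sem Q Delta F S \<longleftrightarrow> S \<subseteq> Q \<times> Q \<and>
     (\<forall>(p, r) \<in> S. (p \<in> F \<longrightarrow> r \<in> F) \<and>
        (\<forall>a p'. (p, a, p') \<in> ctrans sem Delta \<longrightarrow>
                (\<exists>r'. (r, a, r') \<in> ctrans sem Delta \<and> (p', r') \<in> S)))"

definition max_sim :: "('p \<Rightarrow> 'd set) \<Rightarrow> 'q set \<Rightarrow> ('q \<times> 'p \<times> 'q) set \<Rightarrow> 'q set \<Rightarrow> ('q \<times> 'q) set" where
  "max_sim sem Q Delta F =
     (THE S. is_simulation sem Q Delta F S \<and> (\<forall>S'. is_simulation sem Q Delta F S' \<longrightarrow> S' \<subseteq> S))"

definition Pout :: "('q \<times> 'p \<times> 'q) set \<Rightarrow> 'q \<Rightarrow> 'p set" where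
  "Pout Delta q = {\<phi>. \<exists>p. (q, \<phi>, p) \<in> Delta}"

definition out_deg :: "('q \<times> 'p \<times> 'q) set \<Rightarrow> 'q \<Rightarrow> nat" where
  "out_deg Delta q = card {t \<in> Delta. fst t = q}"

fun conj_list :: "'p bform list \<Rightarrow> 'p bform" where
  "conj_list [] = Lit True undefined"
| "conj_list [l] = l"
| "conj_list (l # ls) = AndF l (conj_list ls)"

definition plist :: "('q \<times> 'p \<times> 'q) set \<Rightarrow> 'q \<Rightarrow> 'p list" where
  "plist Delta q = (SOME xs. set xs = Pout Delta q \<and> distinct xs)"

definition mt_form :: "('q \<times> 'p \<times> 'q) set \<Rightarrow> 'q \<Rightarrow> 'p set \<Rightarrow> 'p bform" where
  "mt_form Delta q Phi' = conj_list (map (\<lambda>\<phi>. Lit (\<phi> \<in> Phi') \<phi>) (plist Delta q))"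

text \<open>local minterms at q, identified by the set of positively occurring predicates\<close>
definition minterms_at :: "('p \<Rightarrow> 'd set) \<Rightarrow> ('q \<times> 'p \<times> 'q) set \<Rightarrow> 'q \<Rightarrow> 'p set set" where
  "minterms_at sem Delta q = {Phi'. Phi' \<subseteq> Pout Delta q \<and> IsSat sem (mt_form Delta q Phi')}"

definition DeltaL :: "('p \<Rightarrow> 'd set) \<Rightarrow> ('q \<times> 'p \<times> 'q) set \<Rightarrow> ('q \<times> 'p set \<times> 'q) set" where
  "DeltaL sem Delta = {(p, Phi', q). \<exists>\<phi>. (p, \<phi>, q) \<in> Delta \<and> Phi' \<in> minterms_at sem Delta p \<and>
       IsSat sem (AndF (mt_form Delta p Phi') (Lit True \<phi>))}"

record ('q, 'p) ls_state =
  Sim :: "('q \<times> 'q) set"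
  NotSim :: "('q \<times> 'q) set"
  Cnt :: "'q \<Rightarrow> 'p set \<Rightarrow> 'q \<Rightarrow> nat"
  cost :: nat

text \<open>cost of step 1 (computing Delta_L): enumerating all subsets of predicates leaving q,
  building and checking each candidate minterm, and checking omega /\ phi for every
  transition leaving q and every minterm omega at q\<close>
definition step1_cost ::
  "('p \<Rightarrow> 'd set) \<Rightarrow> ('p bform \<Rightarrow> nat) \<Rightarrow> 'q set \<Rightarrow> ('q \<times> 'p \<times> 'q) set \<Rightarrow> nat" where
  "step1_cost sem qcost Q Delta =
    (\<Sum>q\<in>Q. (\<Sum>Phi'\<in>Pow (Pout Delta q). card (Pout Delta q) + qcost (mt_form Delta q Phi'))
      + (\<Sum>t\<in>{t \<in> Delta. fst t = q}. \<Sum>Phi'\<in>minterms_at sem Delta q.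
             1 + qcost (AndF (mt_form Delta q Phi') (Lit True (fst (snd t))))))"

definition ls_init ::
  "('p \<Rightarrow> 'd set) \<Rightarrow> ('p bform \<Rightarrow> nat) \<Rightarrow> 'q set \<Rightarrow> ('q \<times> 'p \<times> 'q) set \<Rightarrow> 'q set
     \<Rightarrow> ('q, 'p) ls_state" where
  "ls_init sem qcost Q Delta F =
    \<lparr> Sim = Q \<times> Q,
      NotSim = F \<times> (Q - F),
      Cnt = (\<lambda>q \<psi> p. card {r. (q, \<psi>, r) \<in> DeltaL sem Delta}),
      cost = step1_cost sem qcost Q Delta
             + (card (DeltaL sem Delta) + card Q * card {(q, \<psi>). \<exists>t. (q, \<psi>, t) \<in> DeltaL sem Delta})
             + (card Q * card Q + card (F \<times> (Q - F))) \<rparr>"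

definition ls_process ::
  "('p \<Rightarrow> 'd set) \<Rightarrow> ('p bform \<Rightarrow> nat) \<Rightarrow> ('q \<times> 'p \<times> 'q) set \<Rightarrow> 'q \<times> 'q
     \<Rightarrow> ('q, 'p) ls_state \<Rightarrow> ('q, 'p) ls_state" where
  "ls_process sem qcost Delta ij st =
    (let i = fst ij; j = snd ij;
         Sim' = Sim st - {ij};
         decs = {(t, \<psi>). (t, \<psi>, j) \<in> DeltaL sem Delta};
         N' = (\<lambda>t \<psi> p. if p = i \<and> (t, \<psi>) \<in> decs then Cnt st t \<psi> p - 1 else Cnt st t \<psi> p);
         new = {(s, t). \<exists>\<psi> \<phi>. (t, \<psi>) \<in> decs \<and> N' t \<psi> i = 0 \<and> (s, \<phi>, i) \<in> Delta \<and>
                   (s, t) \<in> Sim' \<and> IsSat sem (AndF (mt_form Delta t \<psi>) (Lit True \<phi>))};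
         c = 1 + (\<Sum>(t, \<psi>)\<in>decs. 1 +
               (if N' t \<psi> i = 0 then
                  (\<Sum>x\<in>{x \<in> Delta. snd (snd x) = i}.
                     1 + (if (fst x, t) \<in> Sim' then qcost (AndF (mt_form Delta t \<psi>) (Lit True (fst (snd x))))
                          else 0))
                else 0))
     in \<lparr> Sim = Sim', NotSim = (NotSim st - {ij}) \<union> new, Cnt = N', cost = cost st + c \<rparr>)"

definition ls_step ::
  "('p \<Rightarrow> 'd set) \<Rightarrow> ('p bform \<Rightarrow> nat) \<Rightarrow> ('q \<times> 'p \<times> 'q) set
     \<Rightarrow> ('q, 'p) ls_state \<Rightarrow> ('q, 'p) ls_state \<Rightarrow> bool" where
  "ls_step sem qcost Delta st st' \<longleftrightarrow> (\<exists>ij \<in> NotSim st. st' = ls_process sem qcost Delta ij st)"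

definition ls_reach ::
  "('p \<Rightarrow> 'd set) \<Rightarrow> ('p bform \<Rightarrow> nat) \<Rightarrow> 'q set \<Rightarrow> ('q \<times> 'p \<times> 'q) set \<Rightarrow> 'q set
     \<Rightarrow> ('q, 'p) ls_state \<Rightarrow> bool" where
  "ls_reach sem qcost Q Delta F st \<longleftrightarrow> (ls_step sem qcost Delta)\<^sup>*\<^sup>* (ls_init sem qcost Q Delta F) st"

end

theory Submission
  imports Defs
begin

text \<open>
  LocalSim refines \<open>Q \<times> Q\<close> with counters, run on the locally mintermised automaton. The
  minterms at a state \<open>t\<close> partition the alphabet, and the concrete \<open>a\<close>-successors of \<open>t\<close> are
  exactly its \<open>\<Delta>\<^sub>L\<close>-successors on the minterm containing \<open>a\<close>. Hence a relation is a
  simulation iff each of its pairs \<open>(s, t)\<close> is stable: every transition of \<open>s\<close> into \<open>i\<close> that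
  meets a minterm \<open>\<psi>\<close> of \<open>t\<close> is answered by a \<open>\<psi>\<close>-transition of \<open>t\<close> into a state that may
  still simulate \<open>i\<close>. The counters \<open>N\<^sub>\<psi>(t, i)\<close> count these answers, so \<open>Sim - NotSim\<close>
  always consists of stable pairs and always contains every simulation.

  For the running time, each pair \<open>(i, j)\<close> is removed at most once and pays for the
  \<open>\<Delta>\<^sub>L\<close>-transitions into \<open>j\<close>, and each counter drops to zero at most once and pays for one
  scan of the transitions into \<open>i\<close>, with one satisfiability check each. As there are at most
  \<open>2^m\<^sub>q\<close> minterms at \<open>q\<close>, these totals, together with the cost of computing \<open>\<Delta>\<^sub>L\<close>,
  are bounded by the two summands of the claimed bound.
\<close>

lemma fsem_conj_list: "xs \<noteq> [] \<Longrightarrow> fsem sem (conj_list xs) = (\<Inter>x\<in>set xs. fsem sem x)"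
  by (induction xs rule: conj_list.induct) auto

lemma nops_conj_list:
  "xs \<noteq> [] \<Longrightarrow> \<forall>x\<in>set xs. nops x = 0 \<Longrightarrow> nops (conj_list xs) = length xs - 1"
  by (induction xs rule: conj_list.induct) auto

lemma batoms_conj_list: "xs \<noteq> [] \<Longrightarrow> batoms (conj_list xs) = (\<Union>x\<in>set xs. batoms x)"
  by (induction xs rule: conj_list.induct) auto

locale complete_SFA =
  fixes sem :: "'p \<Rightarrow> 'd set" and Q :: "'q set" and Delta :: "('q \<times> 'p \<times> 'q) set"
    and I F :: "'q set"
  assumes sfa: "sfa sem Q Delta I F" and complete: "complete_sfa sem Q Delta"
begin

lemma finite_Q: "finite Q" and finite_Delta: "finite Delta" and F_subset_Q: "F \<subseteq> Q"
  using sfa by (auto simp: sfa_def)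

lemma Delta_states: "(q, \<phi>, p) \<in> Delta \<Longrightarrow> q \<in> Q \<and> p \<in> Q"
  using sfa unfolding sfa_def by blast

definition preds :: "'p set" where
  "preds = {\<phi>. \<exists>p q. (p, \<phi>, q) \<in> Delta}"

lemma finite_preds: "finite preds"
proof -
  have "preds = (\<lambda>x. fst (snd x)) ` Delta" unfolding preds_def by force
  then show ?thesis using finite_Delta by simp
qed

lemma pred_in_preds: "x \<in> Delta \<Longrightarrow> fst (snd x) \<in> preds"
  unfolding preds_def by (cases x) auto

lemma Pout_subset_preds: "Pout Delta q \<subseteq> preds"
  unfolding Pout_def preds_def by blast

lemma Pout_eq_image: "Pout Delta q = (\<lambda>x. fst (snd x)) ` {x \<in> Delta. fst x = q}"
  unfolding Pout_def by force

lemma finite_Pout: "finite (Pout Delta q)"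
  unfolding Pout_eq_image using finite_Delta by simp

lemma card_Pout_le_out_deg: "card (Pout Delta q) \<le> out_deg Delta q"
  unfolding Pout_eq_image out_deg_def by (rule card_image_le) (simp add: finite_Delta)

lemma Pout_nonempty: "q \<in> Q \<Longrightarrow> Pout Delta q \<noteq> {}"
  using complete unfolding complete_sfa_def ctrans_def Pout_def by blast

lemma card_Pout_pos: "q \<in> Q \<Longrightarrow> 0 < card (Pout Delta q)"
  using Pout_nonempty finite_Pout by (simp add: card_gt_0_iff)

lemma out_deg_pos: "q \<in> Q \<Longrightarrow> 0 < out_deg Delta q"
  using card_Pout_pos card_Pout_le_out_deg by (meson less_le_trans)

lemma set_plist: "set (plist Delta q) = Pout Delta q" and distinct_plist: "distinct (plist Delta q)"
proof -
  have "\<exists>xs. set xs = Pout Delta q \<and> distinct xs"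
    using finite_distinct_list[OF finite_Pout] .
  then have "set (plist Delta q) = Pout Delta q \<and> distinct (plist Delta q)"
    unfolding plist_def by (rule someI_ex)
  then show "set (plist Delta q) = Pout Delta q" and "distinct (plist Delta q)" by auto
qed

lemma plist_nonempty: "q \<in> Q \<Longrightarrow> plist Delta q \<noteq> []"
  using set_plist[of q] Pout_nonempty[of q] by auto

lemma fsem_mt_form:
  "q \<in> Q \<Longrightarrow> fsem sem (mt_form Delta q \<Phi>) = {a. \<forall>\<phi>\<in>Pout Delta q. a \<in> sem \<phi> \<longleftrightarrow> \<phi> \<in> \<Phi>}"
  unfolding mt_form_def using plist_nonempty[of q] set_plist[of q]
  by (subst fsem_conj_list) auto

lemma nops_mt_form:
  assumes q: "q \<in> Q" shows "nops (mt_form Delta q \<Phi>) = card (Pout Delta q) - 1"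
proof -
  have "length (plist Delta q) = card (Pout Delta q)" using set_plist distinct_plist distinct_card by metis
  then show ?thesis unfolding mt_form_def using plist_nonempty[OF q] by (simp add: nops_conj_list)
qed

lemma batoms_mt_form: "q \<in> Q \<Longrightarrow> batoms (mt_form Delta q \<Phi>) = Pout Delta q"
  unfolding mt_form_def using plist_nonempty[of q] set_plist[of q]
  by (subst batoms_conj_list) auto

lemma card_Pow_Pout_le: "card (Pow (Pout Delta q)) \<le> 2 ^ out_deg Delta q"
  using finite_Pout card_Pout_le_out_deg by (simp add: card_Pow power_increasing)

lemma card_minterms_at_le: "card (minterms_at sem Delta q) \<le> 2 ^ out_deg Delta q"
proof -
  have "card (minterms_at sem Delta q) \<le> card (Pow (Pout Delta q))"
    by (rule card_mono) (auto simp: finite_Pout minterms_at_def)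
  then show ?thesis using card_Pow_Pout_le by (rule le_trans)
qed

abbreviation DL :: "('q \<times> 'p set \<times> 'q) set" where
  "DL \<equiv> DeltaL sem Delta"

lemma DeltaL_D: "(p, \<Phi>, q) \<in> DL \<Longrightarrow> p \<in> Q \<and> q \<in> Q \<and> \<Phi> \<subseteq> Pout Delta p"
  unfolding DeltaL_def minterms_at_def using Delta_states by blast

lemma finite_DeltaL: "finite DL"
proof -
  have "DL \<subseteq> Q \<times> Pow preds \<times> Q" using DeltaL_D Pout_subset_preds by fastforce
  then show ?thesis using finite_Q finite_preds by (meson finite_SigmaI finite_Pow_iff finite_subset)
qed

lemma ctrans_iff_DeltaL:
  assumes a: "a \<in> fsem sem (mt_form Delta q \<psi>)" and q: "q \<in> Q" and \<psi>: "\<psi> \<subseteq> Pout Delta q"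
  shows "(q, a, r) \<in> ctrans sem Delta \<longleftrightarrow> (q, \<psi>, r) \<in> DL"
proof
  assume "(q, a, r) \<in> ctrans sem Delta"
  then obtain \<phi> where "(q, \<phi>, r) \<in> Delta" "a \<in> sem \<phi>" unfolding ctrans_def by blast
  then show "(q, \<psi>, r) \<in> DL"
    using a \<psi> unfolding DeltaL_def minterms_at_def IsSat_def by auto
next
  assume "(q, \<psi>, r) \<in> DL"
  then obtain \<phi> b where \<phi>: "(q, \<phi>, r) \<in> Delta" and b: "b \<in> fsem sem (mt_form Delta q \<psi>)" "b \<in> sem \<phi>"
    unfolding DeltaL_def IsSat_def by auto
  have "\<phi> \<in> Pout Delta q" using \<phi> unfolding Pout_def by blast
  then have "a \<in> sem \<phi>" using a b fsem_mt_form[OF q] by auto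
  then show "(q, a, r) \<in> ctrans sem Delta" using \<phi> unfolding ctrans_def by blast
qed

definition sim_succs :: "('q \<times> 'q) set \<Rightarrow> 'q \<Rightarrow> 'p set \<Rightarrow> 'q \<Rightarrow> 'q set" where
  "sim_succs S t \<psi> i = {r. (t, \<psi>, r) \<in> DL \<and> (i, r) \<in> S}"

lemma finite_sim_succs: "finite (sim_succs S t \<psi> i)"
  unfolding sim_succs_def by (rule finite_subset[OF _ finite_Q]) (use DeltaL_D in blast)

definition stable_pair :: "('q \<times> 'q) set \<Rightarrow> 'q \<Rightarrow> 'q \<Rightarrow> bool" where
  "stable_pair S s t \<longleftrightarrow> (s \<in> F \<longrightarrow> t \<in> F) \<and>
     (\<forall>\<phi> i \<psi> r. (s, \<phi>, i) \<in> Delta \<and> (t, \<psi>, r) \<in> DL \<and>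
        IsSat sem (AndF (mt_form Delta t \<psi>) (Lit True \<phi>)) \<longrightarrow> sim_succs S t \<psi> i \<noteq> {})"

lemma stable_pair_if_simulation:
  assumes sim: "is_simulation sem Q Delta F S" and st: "(s, t) \<in> S"
  shows "stable_pair S s t"
  unfolding stable_pair_def
proof (intro conjI allI impI)
  show "s \<in> F \<Longrightarrow> t \<in> F" using sim st unfolding is_simulation_def by blast
next
  fix \<phi> i \<psi> r
  assume "(s, \<phi>, i) \<in> Delta \<and> (t, \<psi>, r) \<in> DL \<and> IsSat sem (AndF (mt_form Delta t \<psi>) (Lit True \<phi>))"
  then obtain a where si: "(s, \<phi>, i) \<in> Delta" and tr: "(t, \<psi>, r) \<in> DL"
    and a: "a \<in> fsem sem (mt_form Delta t \<psi>)" "a \<in> sem \<phi>"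
    unfolding IsSat_def by auto
  have "(s, a, i) \<in> ctrans sem Delta" unfolding ctrans_def using si a by blast
  then obtain r' where r': "(t, a, r') \<in> ctrans sem Delta" "(i, r') \<in> S"
    using sim st unfolding is_simulation_def by fastforce
  have "(t, \<psi>, r') \<in> DL" using r'(1) ctrans_iff_DeltaL[OF a(1)] DeltaL_D[OF tr] by blast
  then show "sim_succs S t \<psi> i \<noteq> {}" using r'(2) unfolding sim_succs_def by blast
qed

lemma simulation_if_stable_pairs:
  assumes SQ: "S \<subseteq> Q \<times> Q" and stable: "\<And>s t. (s, t) \<in> S \<Longrightarrow> stable_pair S s t"
  shows "is_simulation sem Q Delta F S"
  unfolding is_simulation_def
proof (intro conjI SQ ballI, clarify, intro conjI allI impI)
  fix p r assume pr: "(p, r) \<in> S"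
  then show "p \<in> F \<Longrightarrow> r \<in> F" using stable unfolding stable_pair_def by blast
  fix a p' assume "(p, a, p') \<in> ctrans sem Delta"
  then obtain \<phi> where \<phi>: "(p, \<phi>, p') \<in> Delta" "a \<in> sem \<phi>" unfolding ctrans_def by blast
  have r: "r \<in> Q" using pr SQ by auto
  define \<psi> where "\<psi> = {\<phi>' \<in> Pout Delta r. a \<in> sem \<phi>'}"
  have a: "a \<in> fsem sem (mt_form Delta r \<psi>)" using fsem_mt_form[OF r] unfolding \<psi>_def by auto
  have \<psi>: "\<psi> \<subseteq> Pout Delta r" unfolding \<psi>_def by blast
  obtain r'' where "(r, a, r'') \<in> ctrans sem Delta" using complete r unfolding complete_sfa_def by blast
  then have "(r, \<psi>, r'') \<in> DL" using ctrans_iff_DeltaL[OF a r \<psi>] by blast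
  moreover have "IsSat sem (AndF (mt_form Delta r \<psi>) (Lit True \<phi>))"
    unfolding IsSat_def using a \<phi> by auto
  ultimately obtain r' where "(r, \<psi>, r') \<in> DL" "(p', r') \<in> S"
    using stable[OF pr] \<phi> unfolding stable_pair_def sim_succs_def by blast
  then show "\<exists>r'. (r, a, r') \<in> ctrans sem Delta \<and> (p', r') \<in> S"
    using ctrans_iff_DeltaL[OF a r \<psi>] by blast
qed

lemma max_sim_eqI:
  assumes "is_simulation sem Q Delta F S" "\<And>S'. is_simulation sem Q Delta F S' \<Longrightarrow> S' \<subseteq> S"
  shows "max_sim sem Q Delta F = S"
  unfolding max_sim_def by (rule the_equality) (use assms in blast)+

definition DL_sources :: "('q \<times> 'p set) set" where
  "DL_sources = {(q, \<psi>). \<exists>r. (q, \<psi>, r) \<in> DL}"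

lemma finite_DL_sources: "finite DL_sources"
proof -
  have "DL_sources = (\<lambda>x. (fst x, fst (snd x))) ` DL" unfolding DL_sources_def by force
  then show ?thesis using finite_DeltaL by simp
qed

definition pow_deg_sum :: nat where
  "pow_deg_sum = (\<Sum>q\<in>Q. 2 ^ out_deg Delta q)"

definition deg_pow_deg_sum :: nat where
  "deg_pow_deg_sum = (\<Sum>q\<in>Q. out_deg Delta q * 2 ^ out_deg Delta q)"

lemma sum_over_sources:
  "(\<Sum>x\<in>Delta. f x) = (\<Sum>q\<in>Q. \<Sum>x\<in>{x \<in> Delta. fst x = q}. f x)"
  by (rule sum.group[symmetric, OF finite_Delta finite_Q]) (use Delta_states in force)

lemma sum_over_targets:
  "(\<Sum>x\<in>Delta. f x) = (\<Sum>q\<in>Q. \<Sum>x\<in>{x \<in> Delta. snd (snd x) = q}. f x)"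
  by (rule sum.group[symmetric, OF finite_Delta finite_Q]) (use Delta_states in force)

lemma card_Delta_eq_sum_out_deg: "card Delta = (\<Sum>q\<in>Q. out_deg Delta q)"
  using sum_over_sources[of "\<lambda>_. 1::nat"] unfolding out_deg_def by simp

lemma out_deg_le_card_Delta: "out_deg Delta q \<le> card Delta"
  unfolding out_deg_def by (rule card_mono[OF finite_Delta]) auto

lemma card_Delta_pos: "q \<in> Q \<Longrightarrow> 0 < card Delta"
  using out_deg_pos out_deg_le_card_Delta by (meson less_le_trans)

lemma card_Q_le_pow_deg_sum: "card Q \<le> pow_deg_sum"
  unfolding pow_deg_sum_def using sum_mono[of Q "\<lambda>_. 1::nat"] by simp

lemma pow_deg_sum_le_deg_pow_deg_sum: "pow_deg_sum \<le> deg_pow_deg_sum"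
  unfolding pow_deg_sum_def deg_pow_deg_sum_def
  by (rule sum_mono) (simp add: out_deg_pos Suc_le_eq)

lemma deg_pow_deg_sum_le: "deg_pow_deg_sum \<le> card Delta * pow_deg_sum"
  unfolding deg_pow_deg_sum_def pow_deg_sum_def sum_distrib_left
  by (rule sum_mono) (simp add: out_deg_le_card_Delta)

lemma card_Delta_pow_deg_sum_le: "card Delta * pow_deg_sum \<le> 2 * card Q * deg_pow_deg_sum"
proof -
  have "x * 2 ^ y \<le> x * 2 ^ x + y * 2 ^ y" for x y :: nat
  proof (cases "x \<le> y")
    case True
    then show ?thesis using mult_right_mono[OF True, of "2 ^ y"] by linarith
  next
    case False
    then have "(2::nat) ^ y \<le> 2 ^ x" by (intro power_increasing) auto
    then show ?thesis using mult_left_mono[of "2 ^ y" "2 ^ x" x] by linarith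
  qed
  then have "card Delta * pow_deg_sum \<le> (\<Sum>p\<in>Q. \<Sum>q\<in>Q.
      out_deg Delta p * 2 ^ out_deg Delta p + out_deg Delta q * 2 ^ out_deg Delta q)"
    unfolding card_Delta_eq_sum_out_deg pow_deg_sum_def sum_product by (intro sum_mono)
  also have "\<dots> = 2 * card Q * deg_pow_deg_sum"
    unfolding deg_pow_deg_sum_def by (simp add: sum.distrib sum_distrib_left[symmetric])
  finally show ?thesis .
qed

lemma card_DeltaL_le: "card DL \<le> deg_pow_deg_sum"
proof -
  define SG where "SG = (SIGMA x:Delta. Pow (Pout Delta (fst x)))"
  have finite_SG: "finite SG" unfolding SG_def using finite_Delta finite_Pout by auto
  have "DL \<subseteq> (\<lambda>(x, \<Phi>). (fst x, \<Phi>, snd (snd x))) ` SG"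
  proof
    fix y assume y: "y \<in> DL"
    then obtain p \<Phi> q \<phi> where "y = (p, \<Phi>, q)" "(p, \<phi>, q) \<in> Delta" "\<Phi> \<subseteq> Pout Delta p"
      using DeltaL_D unfolding DeltaL_def by blast
    then show "y \<in> (\<lambda>(x, \<Phi>). (fst x, \<Phi>, snd (snd x))) ` SG"
      unfolding SG_def by (auto intro!: image_eqI[of _ _ "((p, \<phi>, q), \<Phi>)"])
  qed
  then have "card DL \<le> card SG" using finite_SG by (meson card_image_le card_mono finite_imageI le_trans)
  also have "\<dots> = (\<Sum>x\<in>Delta. 2 ^ card (Pout Delta (fst x)))"
    unfolding SG_def using finite_Delta finite_Pout by (simp add: card_Pow)
  also have "\<dots> \<le> (\<Sum>x\<in>Delta. 2 ^ out_deg Delta (fst x))"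
    by (intro sum_mono power_increasing card_Pout_le_out_deg) auto
  also have "\<dots> = deg_pow_deg_sum"
    unfolding sum_over_sources deg_pow_deg_sum_def out_deg_def by simp
  finally show ?thesis .
qed

lemma card_DL_sources_le: "card DL_sources \<le> pow_deg_sum"
proof -
  have "DL_sources \<subseteq> (SIGMA q:Q. Pow (Pout Delta q))" unfolding DL_sources_def using DeltaL_D by blast
  then have "card DL_sources \<le> card (SIGMA q:Q. Pow (Pout Delta q))"
    by (intro card_mono) (use finite_Q finite_Pout in auto)
  also have "\<dots> = (\<Sum>q\<in>Q. 2 ^ card (Pout Delta q))" using finite_Q finite_Pout by (simp add: card_Pow)
  also have "\<dots> \<le> pow_deg_sum"
    unfolding pow_deg_sum_def by (intro sum_mono power_increasing card_Pout_le_out_deg) auto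
  finally show ?thesis .
qed

end

locale local_sim = complete_SFA sem Q Delta I F
  for sem :: "'p \<Rightarrow> 'd set" and Q :: "'q set" and Delta :: "('q \<times> 'p \<times> 'q) set"
    and I F :: "'q set" +
  fixes qcost :: "'p bform \<Rightarrow> nat"
begin

definition DL_into :: "'q \<Rightarrow> ('q \<times> 'p set) set" where
  "DL_into j = {(t, \<psi>). (t, \<psi>, j) \<in> DL}"

lemma finite_DL_into: "finite (DL_into j)"
  by (rule finite_subset[OF _ finite_DL_sources]) (auto simp: DL_into_def DL_sources_def)

definition scan_cost :: "'q \<times> 'p set \<times> 'q \<Rightarrow> nat" where
  "scan_cost = (\<lambda>(t, \<psi>, i). \<Sum>x\<in>{x \<in> Delta. snd (snd x) = i}.
     1 + qcost (AndF (mt_form Delta t \<psi>) (Lit True (fst (snd x)))))"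

definition live_counters :: "('q \<times> 'q) set \<Rightarrow> ('q \<times> 'p set \<times> 'q) set" where
  "live_counters S = {(t, \<psi>, i). i \<in> Q \<and> sim_succs S t \<psi> i \<noteq> {}}"

text \<open>
  The amortisation: removing \<open>(i, j)\<close> releases \<open>1 + |DL_into j|\<close>, and a counter
  \<open>N\<^sub>\<psi>(t, i)\<close> that drops to zero releases the cost of the scan it triggers.
\<close>
definition potential :: "('q \<times> 'q) set \<Rightarrow> nat" where
  "potential S = (\<Sum>(i, j)\<in>S. 1 + card (DL_into j)) + sum scan_cost (live_counters S)"

definition budget :: nat where
  "budget = cost (ls_init sem qcost Q Delta F) + potential (Q \<times> Q)"

lemma live_counters_subset: "live_counters S \<subseteq> (\<lambda>(d, i). (fst d, snd d, i)) ` (DL_sources \<times> Q)"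
  unfolding live_counters_def sim_succs_def DL_sources_def by force

lemma finite_live_counters: "finite (live_counters S)"
  using live_counters_subset finite_DL_sources finite_Q by (meson finite_SigmaI finite_imageI finite_subset)

lemma live_counters_mono: "S \<subseteq> S' \<Longrightarrow> live_counters S \<subseteq> live_counters S'"
  unfolding live_counters_def sim_succs_def by blast

definition process_cnt :: "('q, 'p) ls_state \<Rightarrow> 'q \<Rightarrow> 'q \<Rightarrow> 'q \<Rightarrow> 'p set \<Rightarrow> 'q \<Rightarrow> nat" where
  "process_cnt st i j = (\<lambda>t \<psi> p.
     if p = i \<and> (t, \<psi>) \<in> DL_into j then Cnt st t \<psi> p - 1 else Cnt st t \<psi> p)"

definition process_new :: "('q, 'p) ls_state \<Rightarrow> 'q \<Rightarrow> 'q \<Rightarrow> ('q \<times> 'q) set" where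
  "process_new st i j = {(s, t). \<exists>\<psi> \<phi>. (t, \<psi>) \<in> DL_into j \<and> process_cnt st i j t \<psi> i = 0 \<and>
     (s, \<phi>, i) \<in> Delta \<and> (s, t) \<in> Sim st - {(i, j)} \<and> IsSat sem (AndF (mt_form Delta t \<psi>) (Lit True \<phi>))}"

definition process_cost :: "('q, 'p) ls_state \<Rightarrow> 'q \<Rightarrow> 'q \<Rightarrow> nat" where
  "process_cost st i j = 1 + (\<Sum>(t, \<psi>)\<in>DL_into j. 1 +
     (if process_cnt st i j t \<psi> i = 0 then
        (\<Sum>x\<in>{x \<in> Delta. snd (snd x) = i}.
           1 + (if (fst x, t) \<in> Sim st - {(i, j)}
                then qcost (AndF (mt_form Delta t \<psi>) (Lit True (fst (snd x)))) else 0))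
      else 0))"

lemma ls_process_eq: "ls_process sem qcost Delta (i, j) st =
  \<lparr> Sim = Sim st - {(i, j)}, NotSim = (NotSim st - {(i, j)}) \<union> process_new st i j,
    Cnt = process_cnt st i j, cost = cost st + process_cost st i j \<rparr>"
  unfolding ls_process_def Let_def fst_conv snd_conv process_cnt_def process_new_def
    process_cost_def DL_into_def
  by simp

definition ls_inv :: "('q, 'p) ls_state \<Rightarrow> bool" where
  "ls_inv st \<longleftrightarrow> NotSim st \<subseteq> Sim st \<and> Sim st \<subseteq> Q \<times> Q \<and>
     (\<forall>i\<in>Q. \<forall>t \<psi>. Cnt st t \<psi> i = card (sim_succs (Sim st) t \<psi> i)) \<and>
     (\<forall>(s, t)\<in>Sim st - NotSim st. stable_pair (Sim st) s t) \<and>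
     (\<forall>S. is_simulation sem Q Delta F S \<longrightarrow> S \<subseteq> Sim st - NotSim st) \<and>
     cost st + potential (Sim st) \<le> budget"

lemma ls_inv_finite_Sim: "ls_inv st \<Longrightarrow> finite (Sim st)"
  using finite_Q unfolding ls_inv_def by (meson finite_SigmaI finite_subset)

lemma ls_inv_init: "ls_inv (ls_init sem qcost Q Delta F)"
proof -
  have "sim_succs (Q \<times> Q) t \<psi> i = {r. (t, \<psi>, r) \<in> DL}" if "i \<in> Q" for i t \<psi>
    unfolding sim_succs_def using that DeltaL_D by blast
  moreover have "S \<subseteq> Q \<times> Q - F \<times> (Q - F)" if "is_simulation sem Q Delta F S" for S
    using that unfolding is_simulation_def by blast
  moreover have "stable_pair (Q \<times> Q) s t" if "(s, t) \<in> Q \<times> Q - F \<times> (Q - F)" for s t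
    using that Delta_states DeltaL_D unfolding stable_pair_def sim_succs_def by blast
  ultimately show ?thesis
    unfolding ls_inv_def budget_def using F_subset_Q by (simp add: ls_init_def) blast
qed

context
  fixes st i j
  assumes inv: "ls_inv st" and removed: "(i, j) \<in> NotSim st"
begin

lemma removed_in_Sim: "(i, j) \<in> Sim st" and removed_in_Q: "i \<in> Q"
  using inv removed unfolding ls_inv_def by auto

lemma process_cnt_eq: "p \<in> Q \<Longrightarrow> process_cnt st i j t \<psi> p = card (sim_succs (Sim st - {(i, j)}) t \<psi> p)"
proof (cases "p = i \<and> (t, \<psi>) \<in> DL_into j")
  case True
  assume p: "p \<in> Q"
  have "sim_succs (Sim st - {(i, j)}) t \<psi> p = sim_succs (Sim st) t \<psi> p - {j}"
    and "j \<in> sim_succs (Sim st) t \<psi> p"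
    using True removed_in_Sim unfolding sim_succs_def DL_into_def by auto
  then show ?thesis
    using inv p finite_sim_succs unfolding process_cnt_def if_P[OF True] ls_inv_def by simp
next
  case False
  assume p: "p \<in> Q"
  have "sim_succs (Sim st - {(i, j)}) t \<psi> p = sim_succs (Sim st) t \<psi> p"
    using False unfolding sim_succs_def DL_into_def by auto
  then show ?thesis using inv p unfolding process_cnt_def if_not_P[OF False] ls_inv_def by simp
qed

lemma process_cnt_eq_0_iff:
  "process_cnt st i j t \<psi> i = 0 \<longleftrightarrow> sim_succs (Sim st - {(i, j)}) t \<psi> i = {}"
  using process_cnt_eq[OF removed_in_Q] finite_sim_succs by simp

lemma stable_pair_process:
  assumes st': "(s, t) \<in> Sim st - {(i, j)} - ((NotSim st - {(i, j)}) \<union> process_new st i j)"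
  shows "stable_pair (Sim st - {(i, j)}) s t"
  unfolding stable_pair_def
proof (intro conjI allI impI)
  have old: "stable_pair (Sim st) s t" using inv st' unfolding ls_inv_def by blast
  then show "s \<in> F \<Longrightarrow> t \<in> F" unfolding stable_pair_def by blast
  fix \<phi> i' \<psi> r
  assume H: "(s, \<phi>, i') \<in> Delta \<and> (t, \<psi>, r) \<in> DL \<and> IsSat sem (AndF (mt_form Delta t \<psi>) (Lit True \<phi>))"
  show "sim_succs (Sim st - {(i, j)}) t \<psi> i' \<noteq> {}"
  proof
    assume none: "sim_succs (Sim st - {(i, j)}) t \<psi> i' = {}"
    obtain r' where "r' \<in> sim_succs (Sim st) t \<psi> i'" using old H unfolding stable_pair_def by blast
    then have "i' = i" "(t, \<psi>) \<in> DL_into j"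
      using none unfolding sim_succs_def DL_into_def by auto
    then have "(s, t) \<in> process_new st i j"
      using none H st' process_cnt_eq_0_iff unfolding process_new_def by auto
    then show False using st' by blast
  qed
qed

lemma simulation_subset_process:
  assumes sim: "is_simulation sem Q Delta F S"
  shows "S \<subseteq> Sim st - {(i, j)} - ((NotSim st - {(i, j)}) \<union> process_new st i j)"
proof
  fix x assume x: "x \<in> S"
  have S: "S \<subseteq> Sim st - NotSim st" using inv sim unfolding ls_inv_def by blast
  obtain s t where x_eq: "x = (s, t)" by fastforce
  have "(s, t) \<notin> process_new st i j"
  proof
    assume "(s, t) \<in> process_new st i j"
    then obtain \<psi> \<phi> where "(t, \<psi>, j) \<in> DL" "(s, \<phi>, i) \<in> Delta"
      "IsSat sem (AndF (mt_form Delta t \<psi>) (Lit True \<phi>))"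
      and none: "sim_succs (Sim st - {(i, j)}) t \<psi> i = {}"
      unfolding process_new_def DL_into_def process_cnt_eq_0_iff by blast
    then obtain r where "r \<in> sim_succs S t \<psi> i"
      using stable_pair_if_simulation[OF sim x[unfolded x_eq]] unfolding stable_pair_def by blast
    moreover have "sim_succs S t \<psi> i \<subseteq> sim_succs (Sim st - {(i, j)}) t \<psi> i"
      using S removed unfolding sim_succs_def by blast
    ultimately show False using none by blast
  qed
  then show "x \<in> Sim st - {(i, j)} - ((NotSim st - {(i, j)}) \<union> process_new st i j)"
    using S x x_eq removed by auto
qed

lemma potential_process:
  "process_cost st i j + potential (Sim st - {(i, j)}) \<le> potential (Sim st)"
proof -
  define S' where "S' = Sim st - {(i, j)}"
  define zero where "zero = {d \<in> DL_into j. sim_succs S' (fst d) (snd d) i = {}}"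
  define dead where "dead = (\<lambda>d. (fst d, snd d, i)) ` zero"
  have "process_cost st i j \<le> 1 + (\<Sum>d\<in>DL_into j. 1 +
      (if sim_succs S' (fst d) (snd d) i = {} then scan_cost (fst d, snd d, i) else 0))"
    unfolding process_cost_def case_prod_unfold process_cnt_eq_0_iff S'_def
    by (intro add_left_mono sum_mono) (auto simp: scan_cost_def intro!: sum_mono)
  also have "\<dots> = 1 + card (DL_into j) + sum scan_cost dead"
  proof -
    have "(\<Sum>d\<in>DL_into j. if sim_succs S' (fst d) (snd d) i = {} then scan_cost (fst d, snd d, i) else 0)
        = (\<Sum>d\<in>zero. scan_cost (fst d, snd d, i))"
      unfolding zero_def by (rule sum.inter_filter[OF finite_DL_into, symmetric])
    also have "\<dots> = sum scan_cost dead"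
      unfolding dead_def by (subst sum.reindex) (auto simp: inj_on_def prod_eq_iff)
    finally show ?thesis by (simp only: sum.distrib) simp
  qed
  finally have cost: "process_cost st i j \<le> 1 + card (DL_into j) + sum scan_cost dead" .
  have dead: "dead \<subseteq> live_counters (Sim st)" "dead \<inter> live_counters S' = {}"
    using removed_in_Sim removed_in_Q
    unfolding dead_def zero_def live_counters_def sim_succs_def DL_into_def by auto
  have live: "live_counters S' \<subseteq> live_counters (Sim st)"
    unfolding S'_def by (rule live_counters_mono) blast
  have "sum scan_cost (live_counters S') + sum scan_cost dead = sum scan_cost (live_counters S' \<union> dead)"
    using dead(2) finite_live_counters finite_subset[OF dead(1) finite_live_counters]
    by (simp add: sum.union_disjoint Int_commute)
  also have "\<dots> \<le> sum scan_cost (live_counters (Sim st))"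
    using dead(1) live finite_live_counters by (intro sum_mono2) auto
  finally have scans: "sum scan_cost (live_counters S') + sum scan_cost dead
      \<le> sum scan_cost (live_counters (Sim st))" .
  have "(\<Sum>(i, j)\<in>Sim st. 1 + card (DL_into j))
      = 1 + card (DL_into j) + (\<Sum>(i, j)\<in>S'. 1 + card (DL_into j))"
    unfolding S'_def
    using sum.remove[OF ls_inv_finite_Sim[OF inv] removed_in_Sim, of "\<lambda>(i, j). 1 + card (DL_into j)"]
    by simp
  then show ?thesis using cost scans unfolding potential_def S'_def[symmetric] by linarith
qed

lemma ls_inv_process: "ls_inv (ls_process sem qcost Delta (i, j) st)"
  unfolding ls_inv_def ls_process_eq ls_state.simps
proof (intro conjI)
  show "NotSim st - {(i, j)} \<union> process_new st i j \<subseteq> Sim st - {(i, j)}"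
    using inv unfolding ls_inv_def process_new_def by blast
  show "Sim st - {(i, j)} \<subseteq> Q \<times> Q" using inv unfolding ls_inv_def by blast
  show "\<forall>p\<in>Q. \<forall>t \<psi>. process_cnt st i j t \<psi> p = card (sim_succs (Sim st - {(i, j)}) t \<psi> p)"
    using process_cnt_eq by blast
  show "\<forall>(s, t)\<in>Sim st - {(i, j)} - (NotSim st - {(i, j)} \<union> process_new st i j).
      stable_pair (Sim st - {(i, j)}) s t"
    using stable_pair_process by blast
  show "\<forall>S. is_simulation sem Q Delta F S \<longrightarrow>
      S \<subseteq> Sim st - {(i, j)} - (NotSim st - {(i, j)} \<union> process_new st i j)"
    using simulation_subset_process by blast
  have "cost st + potential (Sim st) \<le> budget" using inv unfolding ls_inv_def by blast
  then show "cost st + process_cost st i j + potential (Sim st - {(i, j)}) \<le> budget"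
    using potential_process by linarith
qed

end

lemma ls_reach_inv: "ls_reach sem qcost Q Delta F st \<Longrightarrow> ls_inv st"
  unfolding ls_reach_def
proof (induction rule: rtranclp_induct)
  case base
  show ?case by (rule ls_inv_init)
next
  case (step st st')
  then obtain i j where "(i, j) \<in> NotSim st" "st' = ls_process sem qcost Delta (i, j) st"
    unfolding ls_step_def by auto
  then show ?case using ls_inv_process step.IH by blast
qed

lemma wf_ls_step: "wf {(st', st). ls_reach sem qcost Q Delta F st \<and> ls_step sem qcost Delta st st'}"
proof (rule wf_subset[OF wf_measure[of "\<lambda>st. card (Sim st)"]], clarify)
  fix st' st
  assume "ls_reach sem qcost Q Delta F st" and "ls_step sem qcost Delta st st'"
  then obtain i j where inv: "ls_inv st" and ij: "(i, j) \<in> NotSim st"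
    and st': "st' = ls_process sem qcost Delta (i, j) st"
    using ls_reach_inv unfolding ls_step_def by auto
  have "card (Sim st - {(i, j)}) < card (Sim st)"
    using ls_inv_finite_Sim[OF inv] removed_in_Sim[OF inv ij] by (rule card_Diff1_less)
  then show "(st', st) \<in> measure (\<lambda>st. card (Sim st))" by (simp add: st' ls_process_eq)
qed

lemma ls_inv_final:
  assumes inv: "ls_inv st" and finished: "NotSim st = {}"
  shows "Sim st = max_sim sem Q Delta F"
proof (rule max_sim_eqI[symmetric])
  show "is_simulation sem Q Delta F (Sim st)"
    using inv finished unfolding ls_inv_def by (intro simulation_if_stable_pairs) auto
  show "S \<subseteq> Sim st" if "is_simulation sem Q Delta F S" for S
    using inv finished that unfolding ls_inv_def by auto
qed

definition query_bounded :: "nat \<Rightarrow> bool" where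
  "query_bounded K \<longleftrightarrow> (\<forall>t\<in>Q. \<forall>\<Phi>. qcost (mt_form Delta t \<Phi>) \<le> K \<and>
     (\<forall>\<phi>\<in>preds. qcost (AndF (mt_form Delta t \<Phi>) (Lit True \<phi>)) \<le> K))"

lemma step1_cost_le:
  assumes K: "query_bounded K"
  shows "step1_cost sem qcost Q Delta \<le> 2 * deg_pow_deg_sum + K * pow_deg_sum + K * deg_pow_deg_sum"
proof -
  have enumerate: "(\<Sum>\<Phi>\<in>Pow (Pout Delta q). card (Pout Delta q) + qcost (mt_form Delta q \<Phi>))
      \<le> 2 ^ out_deg Delta q * (out_deg Delta q + K)" if q: "q \<in> Q" for q
  proof -
    have "(\<Sum>\<Phi>\<in>Pow (Pout Delta q). card (Pout Delta q) + qcost (mt_form Delta q \<Phi>))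
        \<le> (\<Sum>\<Phi>\<in>Pow (Pout Delta q). out_deg Delta q + K)"
      using card_Pout_le_out_deg K q unfolding query_bounded_def by (intro sum_mono add_mono) auto
    also have "\<dots> \<le> 2 ^ out_deg Delta q * (out_deg Delta q + K)"
      using mult_right_mono[OF card_Pow_Pout_le] by simp
    finally show ?thesis .
  qed
  have check: "(\<Sum>x\<in>{x \<in> Delta. fst x = q}. \<Sum>\<Phi>\<in>minterms_at sem Delta q.
        1 + qcost (AndF (mt_form Delta q \<Phi>) (Lit True (fst (snd x)))))
      \<le> out_deg Delta q * (2 ^ out_deg Delta q * (1 + K))" if q: "q \<in> Q" for q
  proof -
    have "(\<Sum>x\<in>{x \<in> Delta. fst x = q}. \<Sum>\<Phi>\<in>minterms_at sem Delta q.
          1 + qcost (AndF (mt_form Delta q \<Phi>) (Lit True (fst (snd x)))))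
        \<le> (\<Sum>x\<in>{x \<in> Delta. fst x = q}. \<Sum>\<Phi>\<in>minterms_at sem Delta q. 1 + K)"
      using K q pred_in_preds unfolding query_bounded_def by (intro sum_mono) simp
    also have "\<dots> = out_deg Delta q * (card (minterms_at sem Delta q) * (1 + K))"
      by (simp add: out_deg_def)
    also have "\<dots> \<le> out_deg Delta q * (2 ^ out_deg Delta q * (1 + K))"
      using card_minterms_at_le by (intro mult_left_mono mult_right_mono) auto
    finally show ?thesis .
  qed
  have "step1_cost sem qcost Q Delta \<le> (\<Sum>q\<in>Q.
      2 ^ out_deg Delta q * (out_deg Delta q + K) + out_deg Delta q * (2 ^ out_deg Delta q * (1 + K)))"
    unfolding step1_cost_def using enumerate check by (intro sum_mono add_mono)
  also have "\<dots> = (\<Sum>q\<in>Q. 2 * (out_deg Delta q * 2 ^ out_deg Delta q)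
      + K * 2 ^ out_deg Delta q + K * (out_deg Delta q * 2 ^ out_deg Delta q))"
    by (intro sum.cong) (simp_all add: algebra_simps)
  also have "\<dots> = 2 * deg_pow_deg_sum + K * pow_deg_sum + K * deg_pow_deg_sum"
    unfolding deg_pow_deg_sum_def pow_deg_sum_def by (simp add: sum.distrib sum_distrib_left)
  finally show ?thesis .
qed

lemma sum_DL_into_le: "(\<Sum>j\<in>Q. card (DL_into j)) \<le> card DL"
proof -
  have "card (DL_into j) \<le> card {x \<in> DL. snd (snd x) = j}" for j
  proof -
    have "DL_into j = (\<lambda>x. (fst x, fst (snd x))) ` {x \<in> DL. snd (snd x) = j}"
      unfolding DL_into_def by force
    then show ?thesis using finite_DeltaL by (simp add: card_image_le)
  qed
  then have "(\<Sum>j\<in>Q. card (DL_into j)) \<le> (\<Sum>j\<in>Q. \<Sum>x\<in>{x \<in> DL. snd (snd x) = j}. 1)"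
    by (simp add: sum_mono)
  also have "\<dots> = (\<Sum>x\<in>DL. 1)"
  proof (rule sum.group[OF finite_DeltaL finite_Q])
    show "(\<lambda>x. snd (snd x)) ` DL \<subseteq> Q" using DeltaL_D by fastforce
  qed
  finally show ?thesis by simp
qed

lemma sum_scan_cost_le:
  assumes K: "query_bounded K"
  shows "sum scan_cost (live_counters (Q \<times> Q)) \<le> card DL_sources * (card Delta * (1 + K))"
proof -
  let ?g = "\<lambda>(d :: 'q \<times> 'p set, i :: 'q). (fst d, snd d, i)"
  have "sum scan_cost (live_counters (Q \<times> Q)) \<le> sum scan_cost (?g ` (DL_sources \<times> Q))"
    using live_counters_subset finite_DL_sources finite_Q by (intro sum_mono2) auto
  also have "\<dots> = (\<Sum>(d, i)\<in>DL_sources \<times> Q. scan_cost (fst d, snd d, i))"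
    by (subst sum.reindex) (auto simp: inj_on_def case_prod_unfold)
  also have "\<dots> = (\<Sum>d\<in>DL_sources. \<Sum>i\<in>Q. scan_cost (fst d, snd d, i))"
    by (rule sum.cartesian_product[symmetric])
  also have "\<dots> \<le> (\<Sum>d\<in>DL_sources. card Delta * (1 + K))"
  proof (rule sum_mono)
    fix d assume "d \<in> DL_sources"
    then have t: "fst d \<in> Q" unfolding DL_sources_def using DeltaL_D by auto
    have "(\<Sum>i\<in>Q. scan_cost (fst d, snd d, i)) =
        (\<Sum>x\<in>Delta. 1 + qcost (AndF (mt_form Delta (fst d) (snd d)) (Lit True (fst (snd x)))))"
      unfolding scan_cost_def sum_over_targets by simp
    also have "\<dots> \<le> (\<Sum>x\<in>Delta. 1 + K)"
    proof (rule sum_mono)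
      fix x assume "x \<in> Delta"
      then have "fst (snd x) \<in> preds" by (rule pred_in_preds)
      then show "1 + qcost (AndF (mt_form Delta (fst d) (snd d)) (Lit True (fst (snd x)))) \<le> 1 + K"
        using K t unfolding query_bounded_def by simp
    qed
    also have "\<dots> = card Delta * (1 + K)" by simp
    finally show "(\<Sum>i\<in>Q. scan_cost (fst d, snd d, i)) \<le> card Delta * (1 + K)" .
  qed
  finally show ?thesis by simp
qed

lemma budget_le:
  assumes K: "query_bounded K"
  shows "budget \<le> 10 * (card Q * deg_pow_deg_sum + card Delta * K * pow_deg_sum)"
proof -
  define n m A B where "n = card Q" "m = card Delta" "A = deg_pow_deg_sum" "B = pow_deg_sum"
  define X Y where "X = n * A" "Y = m * K * B"
  have sizes: "B \<le> A" "n \<le> B" "m * B \<le> 2 * X" "A \<le> m * B" "card DL \<le> A" "card DL_sources \<le> B"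
    using pow_deg_sum_le_deg_pow_deg_sum card_Q_le_pow_deg_sum card_Delta_pow_deg_sum_le
      deg_pow_deg_sum_le card_DeltaL_le card_DL_sources_le
    unfolding n_m_A_B_def X_Y_def by (auto simp: mult.assoc)
  have "A \<le> X" "B \<le> m * B"
    using card_Delta_pos finite_Q unfolding X_Y_def n_m_A_B_def pow_deg_sum_def deg_pow_deg_sum_def
    by (cases "Q = {}"; force simp: Suc_le_eq card_gt_0_iff)+
  with sizes have products: "K * B \<le> Y" "K * A \<le> Y" "n * card DL_sources \<le> X" "n * n \<le> X"
    "n * card DL \<le> X"
    unfolding X_Y_def
    by (simp_all add: mult.assoc[symmetric] mult.commute[of _ K] order.trans[OF _ mult_le_mono2])
  have "card (F \<times> (Q - F)) \<le> n * n"
    using card_mono[of "Q \<times> Q" "F \<times> (Q - F)"] finite_Q F_subset_Q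
    unfolding n_m_A_B_def by (auto simp: card_cartesian_product)
  moreover have "cost (ls_init sem qcost Q Delta F) = step1_cost sem qcost Q Delta
      + (card DL + n * card DL_sources) + (n * n + card (F \<times> (Q - F)))"
    unfolding ls_init_def n_m_A_B_def DL_sources_def by simp
  moreover have "step1_cost sem qcost Q Delta \<le> 2 * A + K * B + K * A"
    using step1_cost_le[OF K] unfolding n_m_A_B_def .
  ultimately have init: "cost (ls_init sem qcost Q Delta F) \<le> 6 * X + 2 * Y"
    using products sizes(5) \<open>A \<le> X\<close> by linarith
  have "(\<Sum>(i, j)\<in>Q \<times> Q. 1 + card (DL_into j)) = n * n + n * (\<Sum>j\<in>Q. card (DL_into j))"
    unfolding n_m_A_B_def
    by (simp only: sum.cartesian_product[symmetric] sum.distrib sum_constant) (simp add: algebra_simps)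
  also have "\<dots> \<le> n * n + n * card DL" using sum_DL_into_le by simp
  finally have removals: "(\<Sum>(i, j)\<in>Q \<times> Q. 1 + card (DL_into j)) \<le> 2 * X"
    using products by linarith
  have "sum scan_cost (live_counters (Q \<times> Q)) \<le> card DL_sources * (m * (1 + K))"
    using sum_scan_cost_le[OF K] unfolding n_m_A_B_def .
  also have "\<dots> \<le> B * (m * (1 + K))" using sizes(6) by (rule mult_right_mono) simp
  also have "\<dots> = m * B + Y" unfolding X_Y_def by (simp add: algebra_simps)
  finally have scans: "sum scan_cost (live_counters (Q \<times> Q)) \<le> 2 * X + Y"
    using sizes(3) by linarith
  have "budget \<le> 10 * (X + Y)"
    using init removals scans unfolding budget_def potential_def by simp
  then show ?thesis unfolding X_Y_def n_m_A_B_def .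
qed

definition max_out_deg :: nat where
  "max_out_deg = Max (insert 0 (out_deg Delta ` Q))"

definition max_pred_size :: "('p \<Rightarrow> nat) \<Rightarrow> nat" where
  "max_pred_size sz = Max (insert 0 (sz ` preds))"

lemma query_bounded_Csat:
  assumes "Csat sz qcost max_out_deg (max_pred_size sz) = enat K"
  shows "query_bounded K"
  unfolding query_bounded_def
proof (intro ballI allI conjI)
  fix t \<Phi> \<phi> assume t: "t \<in> Q"
  have deg: "out_deg Delta t \<le> max_out_deg"
    unfolding max_out_deg_def using t finite_Q by (intro Max_ge) auto
  have size: "sz \<phi> \<le> max_pred_size sz" if "\<phi> \<in> preds" for \<phi>
    unfolding max_pred_size_def using that finite_preds by (intro Max_ge) auto
  have bounded: "qcost f \<le> K" if "nops f \<le> max_out_deg" "batoms f \<subseteq> preds" for f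
  proof -
    have "enat (qcost f) \<le> Csat sz qcost max_out_deg (max_pred_size sz)"
      unfolding Csat_def by (rule SUP_upper) (use that size in auto)
    then show ?thesis using assms by simp
  qed
  show "qcost (mt_form Delta t \<Phi>) \<le> K"
    using nops_mt_form[OF t] batoms_mt_form[OF t] card_Pout_le_out_deg[of t] deg Pout_subset_preds
    by (intro bounded) auto
  assume "\<phi> \<in> preds"
  then show "qcost (AndF (mt_form Delta t \<Phi>) (Lit True \<phi>)) \<le> K"
    using nops_mt_form[OF t] batoms_mt_form[OF t] card_Pout_le_out_deg[of t] card_Pout_pos[OF t]
      deg Pout_subset_preds
    by (intro bounded) auto
qed

lemma ls_inv_cost_le:
  assumes inv: "ls_inv st"
  shows "enat (cost st) \<le> enat 10 * (enat (card Q * deg_pow_deg_sum)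
    + enat (card Delta) * Csat sz qcost max_out_deg (max_pred_size sz) * enat pow_deg_sum)"
proof -
  have cost: "cost st \<le> budget" using inv unfolding ls_inv_def by linarith
  show ?thesis
  proof (cases "Csat sz qcost max_out_deg (max_pred_size sz)")
    case (enat K)
    then show ?thesis using cost budget_le[OF query_bounded_Csat[OF enat]] by simp
  next
    case infinity
    show ?thesis
    proof (cases "Q = {}")
      case True
      then have "query_bounded 0" unfolding query_bounded_def by simp
      then show ?thesis using cost budget_le[of 0] True by (simp add: zero_enat_def[symmetric])
    next
      case False
      then have "0 < card Delta" "0 < pow_deg_sum"
        using card_Delta_pos card_Q_le_pow_deg_sum finite_Q by (auto simp: card_gt_0_iff)
      then show ?thesis using infinity by simp
    qed
  qed
qed

end

theorem lemma4:
  "\<exists>c::nat. \<forall>(sem :: 'p \<Rightarrow> 'd set) (sz :: 'p \<Rightarrow> nat) (qcost :: 'p bform \<Rightarrow> nat)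
      (Q :: 'q set) (Delta :: ('q \<times> 'p \<times> 'q) set) (I :: 'q set) (F :: 'q set).
    sfa sem Q Delta I F \<and> complete_sfa sem Q Delta \<longrightarrow>
    (let n = card Q; m = card Delta;
         k = Max (insert 0 (sz ` {\<phi>. \<exists>p q. (p, \<phi>, q) \<in> Delta}));
         mhat = Max (insert 0 (out_deg Delta ` Q))
     in wf {(st', st). ls_reach sem qcost Q Delta F st \<and> ls_step sem qcost Delta st st'} \<and>
        (\<forall>st. ls_reach sem qcost Q Delta F st \<longrightarrow>
           (NotSim st = {} \<longrightarrow> Sim st = max_sim sem Q Delta F) \<and>
           enat (cost st) \<le> enat c * (enat (n * (\<Sum>q\<in>Q. out_deg Delta q * 2 ^ out_deg Delta q))
                  + enat m * Csat sz qcost mhat k * enat (\<Sum>q\<in>Q. 2 ^ out_deg Delta q))))"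
  apply (intro exI[of _ 10] allI impI)
  subgoal premises automaton for sem sz qcost Q Delta I F
  proof -
    interpret local_sim sem Q Delta I F qcost using automaton by unfold_locales auto
    show ?thesis
      unfolding Let_def preds_def[symmetric] max_pred_size_def[symmetric] max_out_deg_def[symmetric]
        deg_pow_deg_sum_def[symmetric] pow_deg_sum_def[symmetric]
      using wf_ls_step ls_reach_inv ls_inv_final ls_inv_cost_le by blast
  qed
  done

end
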